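(* For integers $r\geq 3$ and $n\geq 2r+3$, the complex $\Delta_2^t(C_n^r)$ is simply connected, i.e. $\pi_1(\Delta_2^t(C_n^r))\cong 0$.
   Context: All graphs are finite and simple; $\alpha(G)$ is the independence number and $G[S]$ the induced subgraph on $S$. $\Delta_2^t(G)=\{\sigma\subseteq V(G):\ \alpha(G[V(G)\setminus\sigma])\geq 2\}$. $C_n$ is the cycle on $\{1,\dots,n\}$ with edges $\{i,i+1\}$ and $\{1,n\}$; $C_n^r$ is the graph on the same vertices where distinct vertices are adjacent iff their distance in $C_n$ is at most $r$. *)

theory Defs
  imports "HOL-Analysis.Analysis"
begin

text \<open>Simple graphs are given by a vertex set V and a symmetric irreflexive
  adjacency predicate E.\<close>

definition independent_set :: "(nat \<Rightarrow> nat \<Rightarrow> bool) \<Rightarrow> nat set \<Rightarrow> bool" where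
  "independent_set E S \<longleftrightarrow> (\<forall>u\<in>S. \<forall>v\<in>S. \<not> E u v)"

definition indep_number :: "(nat \<Rightarrow> nat \<Rightarrow> bool) \<Rightarrow> nat set \<Rightarrow> nat" where
  "indep_number E W = Max {card S | S. S \<subseteq> W \<and> independent_set E S}"

definition cycle_dist :: "nat \<Rightarrow> nat \<Rightarrow> nat \<Rightarrow> nat" where
  "cycle_dist n i j = min (if i \<le> j then j - i else i - j) (n - (if i \<le> j then j - i else i - j))"

definition cyc_pow_adj :: "nat \<Rightarrow> nat \<Rightarrow> nat \<Rightarrow> nat \<Rightarrow> bool" where
  "cyc_pow_adj n r i j \<longleftrightarrow> i \<in> {1..n} \<and> j \<in> {1..n} \<and> i \<noteq> j \<and> cycle_dist n i j \<le> r"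

definition Delta2t :: "nat set \<Rightarrow> (nat \<Rightarrow> nat \<Rightarrow> bool) \<Rightarrow> nat set set" where
  "Delta2t V E = {\<sigma>. \<sigma> \<subseteq> V \<and> indep_number E (V - \<sigma>) \<ge> 2}"

text \<open>Geometric realization of a simplicial complex on finitely many natural-number
  vertices: points x :: nat \<Rightarrow> real (product topology) that are convex
  combinations of the vertices of some face.\<close>
definition geom_realization :: "nat set set \<Rightarrow> (nat \<Rightarrow> real) set" where
  "geom_realization K = {x. \<exists>\<sigma>\<in>K. finite \<sigma> \<and> (\<forall>i. 0 \<le> x i) \<and> (\<forall>i. i \<notin> \<sigma> \<longrightarrow> x i = 0)
                              \<and> sum x \<sigma> = 1}"

end

theory Submission
  imports Defs
begin

text \<open>Every set of at most three vertices is a face of \<open>\<Delta>\<^sub>2\<^sup>t(C\<^sub>n\<^sup>r)\<close>: of the four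
  pairs \<open>{i, i + r + 1}\<close>, \<open>i = 1..4\<close>, one avoids the given set, and each such pair is
  independent because \<open>n \<ge> 2r + 3\<close>. A complex containing the full 2-skeleton of the simplex
  on its vertex set is simply connected: a loop is subdivided so that every piece lies in an
  open vertex star, and is then pushed, one triangle of the 2-skeleton at a time, onto a
  loop inside a single face.\<close>

text \<open>Realizations are built in the Banach space of bounded functions \<open>nat \<Rightarrow> real\<close>, where
  convexity and straight-line homotopies are available; \<^const>\<open>geom_realization\<close> lives in the
  product space \<open>nat \<Rightarrow> real\<close>, which is not a vector space, and is recovered at the end by
  a retraction.\<close>

definition vertex :: "nat \<Rightarrow> nat \<Rightarrow>\<^sub>C real" where
  "vertex v = Bcontfun (\<lambda>j. if j = v then 1 else 0)"

lemma vertex_apply [simp]: "apply_bcontfun (vertex v) j = (if j = v then 1 else 0)"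
proof -
  have "(\<lambda>j::nat. if j = v then 1 else (0::real)) \<in> bcontfun"
    by (rule bcontfun_normI[where b=1]) auto
  then show ?thesis
    unfolding vertex_def by (simp add: Bcontfun_inverse)
qed

definition face_simplex :: "nat set \<Rightarrow> (nat \<Rightarrow>\<^sub>C real) set" where
  "face_simplex \<sigma> = {y. (\<forall>i. 0 \<le> apply_bcontfun y i) \<and> (\<forall>i. i \<notin> \<sigma> \<longrightarrow> apply_bcontfun y i = 0)
                       \<and> sum (apply_bcontfun y) \<sigma> = 1}"

lemma convex_face_simplex: "convex (face_simplex \<sigma>)"
  unfolding convex_def face_simplex_def
  by (auto simp: sum.distrib sum_distrib_left[symmetric])

lemma vertex_in_face_simplex: "finite \<sigma> \<Longrightarrow> v \<in> \<sigma> \<Longrightarrow> vertex v \<in> face_simplex \<sigma>"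
  by (auto simp: face_simplex_def sum.delta)

lemma face_simplex_support: "y \<in> face_simplex \<sigma> \<Longrightarrow> apply_bcontfun y v \<noteq> 0 \<Longrightarrow> v \<in> \<sigma>"
  by (auto simp: face_simplex_def)

lemma linepath_in_face_simplex:
  "x \<in> face_simplex \<sigma> \<Longrightarrow> y \<in> face_simplex \<sigma> \<Longrightarrow> path_image (linepath x y) \<subseteq> face_simplex \<sigma>"
  using closed_segment_subset[OF _ _ convex_face_simplex] by simp

definition via_edge :: "(nat \<Rightarrow>\<^sub>C real) \<Rightarrow> nat \<Rightarrow> nat \<Rightarrow> (nat \<Rightarrow>\<^sub>C real) \<Rightarrow> real \<Rightarrow> nat \<Rightarrow>\<^sub>C real" where
  "via_edge x a b y = linepath x (vertex a) +++ linepath (vertex a) (vertex b) +++ linepath (vertex b) y"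

lemma apply_bcontfun_sum:
  "finite A \<Longrightarrow> apply_bcontfun (sum f A) j = (\<Sum>i\<in>A. apply_bcontfun (f i) j)"
  by (induction A rule: finite_induct) auto

lemma continuous_on_bcontfun_eval:
  "continuous_on S (\<lambda>y::'a::topological_space \<Rightarrow>\<^sub>C 'b::metric_space. apply_bcontfun y i)"
proof -
  have "1-lipschitz_on S (\<lambda>y::'a \<Rightarrow>\<^sub>C 'b. apply_bcontfun y i)"
    by (rule lipschitz_onI) (auto intro: dist_bounded)
  then show ?thesis
    by (rule lipschitz_on_continuous_on)
qed

lemma homotopic_paths_in_simply_connected_subset:
  fixes S C :: "'a::real_normed_vector set"
  assumes "simply_connected C" "C \<subseteq> S" "path g" "path h" "path_image g \<subseteq> C" "path_image h \<subseteq> C"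
    "pathstart h = pathstart g" "pathfinish h = pathfinish g"
  shows "homotopic_paths S g h"
  using assms unfolding simply_connected_eq_homotopic_paths
  by (meson homotopic_paths_subset)

locale contains_2_skeleton =
  fixes V :: "nat set" and K :: "nat set set"
  assumes finite_V: "finite V" and V_nonempty: "V \<noteq> {}"
    and face_subset: "\<And>\<sigma>. \<sigma> \<in> K \<Longrightarrow> \<sigma> \<subseteq> V"
    and small_face: "\<And>\<tau>. \<tau> \<subseteq> V \<Longrightarrow> card \<tau> \<le> 3 \<Longrightarrow> \<tau> \<in> K"
begin

definition realization :: "(nat \<Rightarrow>\<^sub>C real) set" where
  "realization = (\<Union>\<sigma>\<in>K. face_simplex \<sigma>)"

definition open_star :: "nat \<Rightarrow> (nat \<Rightarrow>\<^sub>C real) set" where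
  "open_star v = {y \<in> realization. 0 < apply_bcontfun y v}"

lemma finite_face: "\<sigma> \<in> K \<Longrightarrow> finite \<sigma>"
  using face_subset finite_V finite_subset by blast

lemma face_simplex_subset_realization: "\<sigma> \<in> K \<Longrightarrow> face_simplex \<sigma> \<subseteq> realization"
  by (auto simp: realization_def)

lemma open_star_subset_realization: "open_star v \<subseteq> realization"
  by (auto simp: open_star_def)

lemma open_star_face:
  assumes "y \<in> open_star v"
  obtains \<sigma> where "\<sigma> \<in> K" "y \<in> face_simplex \<sigma>" "v \<in> \<sigma>"
  using assms face_simplex_support unfolding open_star_def realization_def by fastforce

lemma open_star_common_face:
  assumes "y \<in> open_star u" "y \<in> open_star v"
  obtains \<sigma> where "\<sigma> \<in> K" "y \<in> face_simplex \<sigma>" "vertex u \<in> face_simplex \<sigma>" "vertex v \<in> face_simplex \<sigma>"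
proof -
  obtain \<sigma> where \<sigma>: "\<sigma> \<in> K" "y \<in> face_simplex \<sigma>" "u \<in> \<sigma>"
    using open_star_face[OF assms(1)] by blast
  moreover have "v \<in> \<sigma>"
    using assms(2) \<sigma>(2) face_simplex_support unfolding open_star_def by fastforce
  ultimately show ?thesis
    using that vertex_in_face_simplex finite_face by blast
qed

lemma triangle_face:
  assumes "u \<in> V" "v \<in> V" "w \<in> V"
  obtains \<sigma> where "\<sigma> \<in> K" "vertex u \<in> face_simplex \<sigma>" "vertex v \<in> face_simplex \<sigma>" "vertex w \<in> face_simplex \<sigma>"
proof -
  have "card {u, v, w} \<le> 3"
    by (simp add: card_insert_if)
  then have "{u, v, w} \<in> K"
    using assms by (intro small_face) auto
  then show ?thesis
    using that vertex_in_face_simplex finite_face by blast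
qed

lemma vertex_in_open_star: "v \<in> V \<Longrightarrow> vertex v \<in> open_star v"
  using vertex_in_face_simplex[of "{v}" v] face_simplex_subset_realization[of "{v}"] small_face[of "{v}"]
  unfolding open_star_def by auto

lemma closed_segment_vertex_subset_open_star:
  assumes "y \<in> open_star v"
  shows "closed_segment (vertex v) y \<subseteq> open_star v"
proof
  fix z assume z: "z \<in> closed_segment (vertex v) y"
  obtain \<sigma> where \<sigma>: "\<sigma> \<in> K" "y \<in> face_simplex \<sigma>" "v \<in> \<sigma>"
    using open_star_face[OF assms] by blast
  have "closed_segment (vertex v) y \<subseteq> face_simplex \<sigma>"
    using \<sigma> vertex_in_face_simplex finite_face convex_face_simplex by (intro closed_segment_subset) auto
  with z \<sigma> have "z \<in> realization"
    using face_simplex_subset_realization by blast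
  moreover from z obtain u where u: "0 \<le> u" "u \<le> 1" "z = (1 - u) *\<^sub>R vertex v + u *\<^sub>R y"
    unfolding closed_segment_def by blast
  moreover have "0 < apply_bcontfun y v"
    using assms by (simp add: open_star_def)
  then have "0 < (1 - u) + u * apply_bcontfun y v"
    using u by (smt (verit) mult_nonneg_nonneg mult_pos_pos)
  ultimately show "z \<in> open_star v"
    by (simp add: open_star_def)
qed

lemma linepath_vertex_open_star:
  assumes "y \<in> open_star v"
  shows "path_image (linepath (vertex v) y) \<subseteq> open_star v" "path_image (linepath y (vertex v)) \<subseteq> open_star v"
  using closed_segment_vertex_subset_open_star[OF assms] by (simp_all add: closed_segment_commute)

lemma starlike_open_star: "v \<in> V \<Longrightarrow> starlike (open_star v)"
  unfolding starlike_def using vertex_in_open_star closed_segment_vertex_subset_open_star by blast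

lemma homotopic_paths_in_open_star:
  assumes "v \<in> V" "path g" "path h" "path_image g \<subseteq> open_star v" "path_image h \<subseteq> open_star v"
    "pathstart h = pathstart g" "pathfinish h = pathfinish g"
  shows "homotopic_paths realization g h"
  using assms starlike_imp_simply_connected[OF starlike_open_star] open_star_subset_realization
  by (intro homotopic_paths_in_simply_connected_subset[where C="open_star v"]) auto

lemma homotopic_paths_in_face:
  assumes "\<sigma> \<in> K" "path g" "path h" "path_image g \<subseteq> face_simplex \<sigma>" "path_image h \<subseteq> face_simplex \<sigma>"
    "pathstart h = pathstart g" "pathfinish h = pathfinish g"
  shows "homotopic_paths realization g h"
  using assms convex_imp_simply_connected[OF convex_face_simplex] face_simplex_subset_realization
  by (intro homotopic_paths_in_simply_connected_subset[where C="face_simplex \<sigma>"]) auto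

lemma exists_large_coordinate:
  assumes "y \<in> realization"
  shows "\<exists>v\<in>V. 1 / real (card V) \<le> apply_bcontfun y v"
proof (rule ccontr)
  assume "\<not> ?thesis"
  then have small: "\<And>v. v \<in> V \<Longrightarrow> apply_bcontfun y v < 1 / real (card V)"
    by force
  obtain \<sigma> where \<sigma>: "\<sigma> \<in> K" "y \<in> face_simplex \<sigma>"
    using assms by (auto simp: realization_def)
  have "1 = sum (apply_bcontfun y) \<sigma>"
    using \<sigma> by (simp add: face_simplex_def)
  also have "\<dots> = sum (apply_bcontfun y) V"
    using \<sigma> face_subset finite_V by (intro sum.mono_neutral_left) (auto simp: face_simplex_def)
  also have "\<dots> < (\<Sum>v\<in>V. 1 / real (card V))"
    using small finite_V V_nonempty by (intro sum_strict_mono) auto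
  also have "\<dots> = 1"
    using finite_V V_nonempty by simp
  finally show False
    by simp
qed

lemma near_point_in_open_star:
  assumes "z \<in> realization" "c \<le> apply_bcontfun y v" "dist z y < c"
  shows "z \<in> open_star v"
proof -
  have "dist (apply_bcontfun z v) (apply_bcontfun y v) < c"
    using dist_bounded assms(3) by (rule le_less_trans)
  then show ?thesis
    using assms(1,2) by (auto simp: open_star_def dist_real_def)
qed

lemma path_subdivision_in_open_stars:
  assumes p: "path p" "path_image p \<subseteq> realization"
  obtains N w where "N > 0" "\<And>k. k < N \<Longrightarrow> w k \<in> V"
    "\<And>k t. k < N \<Longrightarrow> t \<in> {real k / N .. real (Suc k) / N} \<Longrightarrow> p t \<in> open_star (w k)"
proof -
  define c where "c = 1 / real (card V)"
  have "0 < c"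
    using finite_V V_nonempty by (simp add: c_def card_gt_0_iff)
  moreover have "uniformly_continuous_on {0..1} p"
    using p(1) by (intro compact_uniformly_continuous) (auto simp: path_def)
  ultimately obtain d where d: "d > 0"
    "\<And>s t. s \<in> {0..1} \<Longrightarrow> t \<in> {0..1} \<Longrightarrow> dist t s < d \<Longrightarrow> dist (p t) (p s) < c"
    unfolding uniformly_continuous_on_def by metis
  obtain N :: nat where N: "N > 0" "inverse (real N) < d"
    using ex_inverse_of_nat_less[OF d(1)] by blast
  have "\<exists>v\<in>V. \<forall>t\<in>{real k / N .. real (Suc k) / N}. p t \<in> open_star v" if k: "k < N" for k
  proof -
    have tk: "real k / N \<in> {0..1}"
      using k by auto
    then obtain v where v: "v \<in> V" "c \<le> apply_bcontfun (p (real k / N)) v"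
      using exists_large_coordinate p(2) unfolding c_def path_image_def by blast
    have "p t \<in> open_star v" if t: "t \<in> {real k / N .. real (Suc k) / N}" for t
    proof -
      have "0 \<le> real k / N" "real (Suc k) / N \<le> 1"
        using k by simp_all
      then have t01: "t \<in> {0..1}"
        using t by (meson atLeastAtMost_iff order_trans)
      have "real (Suc k) / N - real k / N = inverse (real N)"
        by (simp add: add_divide_distrib inverse_eq_divide)
      then have "dist t (real k / N) \<le> inverse (real N)"
        using t by (auto simp: dist_real_def)
      then have "dist (p t) (p (real k / N)) < c"
        using d N tk t01 by force
      then show ?thesis
        using p(2) t01 by (intro near_point_in_open_star[OF _ v(2)]) (auto simp: path_image_def)
    qed
    then show ?thesis
      using v by blast
  qed
  then show ?thesis
    using that N(1) by metis
qed

text \<open>The edge \<open>b c\<close> replaces the detour through \<open>y\<close> inside a face containing \<open>y, b, c\<close>,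
  and the edge \<open>a c\<close> replaces \<open>a b c\<close> inside the triangle \<open>{a, b, c} \<in> K\<close>.\<close>

lemma homotopic_paths_triangle_detour:
  assumes "x \<in> open_star a" "a \<in> V" "b \<in> V" "c \<in> V" "y \<in> open_star b" "y \<in> open_star c" "z \<in> open_star c"
  shows "homotopic_paths realization
     (via_edge x a b y +++ linepath y (vertex c) +++ linepath (vertex c) z) (via_edge x a c z)"
proof -
  let ?L = "linepath x (vertex a)" and ?M = "linepath (vertex a) (vertex b)"
    and ?R = "linepath (vertex b) y" and ?A = "linepath y (vertex c)" and ?B = "linepath (vertex c) z"
    and ?E = "linepath (vertex b) (vertex c)"
  obtain \<sigma> where \<sigma>: "\<sigma> \<in> K" "y \<in> face_simplex \<sigma>" "vertex b \<in> face_simplex \<sigma>" "vertex c \<in> face_simplex \<sigma>"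
    using open_star_common_face assms(5,6) by blast
  obtain \<tau> where \<tau>: "\<tau> \<in> K" "vertex a \<in> face_simplex \<tau>" "vertex b \<in> face_simplex \<tau>" "vertex c \<in> face_simplex \<tau>"
    using triangle_face assms(2-4) by blast
  have edges: "path_image ?L \<subseteq> realization" "path_image ?M \<subseteq> realization" "path_image ?R \<subseteq> realization"
    "path_image ?A \<subseteq> realization" "path_image ?B \<subseteq> realization" "path_image ?E \<subseteq> realization"
    using linepath_vertex_open_star[OF assms(1)] linepath_vertex_open_star[OF assms(7)]
      linepath_in_face_simplex[OF \<sigma>(3,2)] linepath_in_face_simplex[OF \<sigma>(2,4)]
      linepath_in_face_simplex[OF \<tau>(2,3)] linepath_in_face_simplex[OF \<tau>(3,4)]
      open_star_subset_realization face_simplex_subset_realization[OF \<sigma>(1)]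
      face_simplex_subset_realization[OF \<tau>(1)]
    by blast+
  have triangle_\<sigma>: "homotopic_paths realization (?R +++ ?A) ?E"
    using \<sigma> linepath_in_face_simplex by (intro homotopic_paths_in_face[OF \<sigma>(1)]) (auto simp: path_image_join)
  have triangle_\<tau>: "homotopic_paths realization (?M +++ ?E) (linepath (vertex a) (vertex c))"
    using \<tau> linepath_in_face_simplex by (intro homotopic_paths_in_face[OF \<tau>(1)]) (auto simp: path_image_join)
  have "homotopic_paths realization ((?L +++ ?M +++ ?R) +++ ?A +++ ?B) (?L +++ (?M +++ ?R) +++ ?A +++ ?B)"
    by (rule homotopic_paths_sym[OF homotopic_paths_assoc]) (simp_all add: edges[simplified] path_image_join)
  also have "homotopic_paths realization \<dots> (?L +++ ?M +++ ?R +++ ?A +++ ?B)"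
    by (rule homotopic_paths_join[OF _ homotopic_paths_sym[OF homotopic_paths_assoc]])
      (simp_all add: edges[simplified] path_image_join)
  also have "homotopic_paths realization \<dots> (?L +++ ?M +++ (?R +++ ?A) +++ ?B)"
    by (rule homotopic_paths_join[OF _ homotopic_paths_join[OF _ homotopic_paths_assoc]])
      (simp_all add: edges[simplified])
  also have "homotopic_paths realization \<dots> (?L +++ ?M +++ ?E +++ ?B)"
    by (rule homotopic_paths_join[OF _ homotopic_paths_join[OF _ homotopic_paths_join[OF triangle_\<sigma>]]])
      (simp_all add: edges[simplified])
  also have "homotopic_paths realization \<dots> (?L +++ (?M +++ ?E) +++ ?B)"
    by (rule homotopic_paths_join[OF _ homotopic_paths_assoc]) (simp_all add: edges[simplified])
  also have "homotopic_paths realization \<dots> (?L +++ linepath (vertex a) (vertex c) +++ ?B)"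
    by (rule homotopic_paths_join[OF _ homotopic_paths_join[OF triangle_\<tau>]]) (simp_all add: edges[simplified])
  finally show ?thesis
    unfolding via_edge_def .
qed

lemma homotopic_initial_subpath_via_edge:
  assumes p: "path p" "path_image p \<subseteq> realization"
    and w: "\<And>k. k < N \<Longrightarrow> w k \<in> V"
    and cover: "\<And>k t. k < N \<Longrightarrow> t \<in> {real k / N .. real (Suc k) / N} \<Longrightarrow> p t \<in> open_star (w k)"
    and "m < N"
  shows "homotopic_paths realization (subpath 0 (real (Suc m) / N) p)
           (via_edge (p 0) (w 0) (w m) (p (real (Suc m) / N)))"
  using \<open>m < N\<close>
proof (induction m)
  case 0
  have a: "w 0 \<in> V"
    using w 0 by blast
  have ends: "p 0 \<in> open_star (w 0)" "p (1 / N) \<in> open_star (w 0)"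
    using cover[of 0] 0 by auto
  have "path_image (subpath 0 (1 / N) p) \<subseteq> open_star (w 0)"
    using cover[of 0] 0 by (auto simp: path_image_subpath)
  then show ?case
    using 0 p(1) linepath_vertex_open_star[OF ends(1)] linepath_vertex_open_star[OF ends(2)]
      vertex_in_open_star[OF a]
    unfolding via_edge_def
    by (intro homotopic_paths_in_open_star[OF a])
      (auto simp del: linepath_trivial simp: path_image_join path_subpath)
next
  case (Suc m)
  define t1 t2 where "t1 = real (Suc m) / N" and "t2 = real (Suc (Suc m)) / N"
  have t: "0 \<le> t1" "t1 \<le> t2" "t2 \<le> 1"
    using Suc.prems by (auto simp: t1_def t2_def divide_right_mono)
  have wV: "w 0 \<in> V" "w m \<in> V" "w (Suc m) \<in> V"
    using w Suc.prems by auto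
  have x: "p 0 \<in> open_star (w 0)"
    using cover[of 0 0] Suc.prems by simp
  have y: "p t1 \<in> open_star (w m)" "p t1 \<in> open_star (w (Suc m))"
    using cover[of m t1] cover[of "Suc m" t1] Suc.prems by (auto simp: t1_def divide_right_mono)
  have z: "p t2 \<in> open_star (w (Suc m))"
    using cover[of "Suc m" t2] Suc.prems by (auto simp: t2_def divide_right_mono)
  have "path_image (subpath t1 t2 p) \<subseteq> open_star (w (Suc m))"
    using cover[of "Suc m"] Suc.prems t by (auto simp: path_image_subpath t1_def t2_def)
  then have last_piece: "homotopic_paths realization (subpath t1 t2 p)
      (linepath (p t1) (vertex (w (Suc m))) +++ linepath (vertex (w (Suc m))) (p t2))"
    using p(1) t linepath_vertex_open_star[OF y(2)] linepath_vertex_open_star[OF z]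
    by (intro homotopic_paths_in_open_star[OF wV(3)]) (auto simp: path_image_join path_subpath)
  have "homotopic_paths realization (subpath 0 t2 p) (subpath 0 t1 p +++ subpath t1 t2 p)"
    by (rule homotopic_paths_sym[OF homotopic_join_subpaths1]) (use p t in auto)
  also have "homotopic_paths realization \<dots> (via_edge (p 0) (w 0) (w m) (p t1)
      +++ linepath (p t1) (vertex (w (Suc m))) +++ linepath (vertex (w (Suc m))) (p t2))"
    using Suc last_piece by (intro homotopic_paths_join) (simp_all add: t1_def via_edge_def)
  also have "homotopic_paths realization \<dots> (via_edge (p 0) (w 0) (w (Suc m)) (p t2))"
    by (rule homotopic_paths_triangle_detour[OF x wV y z])
  finally show ?case
    unfolding t2_def .
qed

lemma loop_homotopic_constant:
  assumes p: "path p" "path_image p \<subseteq> realization" "pathfinish p = pathstart p"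
  shows "homotopic_paths realization p (linepath (pathstart p) (pathstart p))"
proof -
  obtain N w where N: "N > 0" and w: "\<And>k. k < N \<Longrightarrow> w k \<in> V"
    and cover: "\<And>k t. k < N \<Longrightarrow> t \<in> {real k / N .. real (Suc k) / N} \<Longrightarrow> p t \<in> open_star (w k)"
    using path_subdivision_in_open_stars[OF p(1,2)] by blast
  define m where "m = N - 1"
  have m: "m < N" "real (Suc m) / N = 1"
    using N by (auto simp: m_def)
  have closed: "p 1 = p 0"
    using p(3) by (simp add: pathstart_def pathfinish_def)
  then have "p 0 \<in> open_star (w 0)" "p 0 \<in> open_star (w m)"
    using cover[of 0 0] cover[of m 1] N m by auto
  then obtain \<sigma> where \<sigma>: "\<sigma> \<in> K" "p 0 \<in> face_simplex \<sigma>"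
    "vertex (w 0) \<in> face_simplex \<sigma>" "vertex (w m) \<in> face_simplex \<sigma>"
    by (rule open_star_common_face)
  have "homotopic_paths realization p (via_edge (p 0) (w 0) (w m) (p 0))"
    using homotopic_initial_subpath_via_edge[OF p(1,2) w cover m(1)] m(2) closed by simp
  also have "homotopic_paths realization \<dots> (linepath (p 0) (p 0))"
    using \<sigma> linepath_in_face_simplex unfolding via_edge_def
    by (intro homotopic_paths_in_face[OF \<sigma>(1)]) (auto simp: path_image_join)
  finally show ?thesis
    by (simp add: pathstart_def)
qed

lemma path_connected_realization: "path_connected realization"
proof -
  obtain u where u: "u \<in> V"
    using V_nonempty by blast
  have "path_component realization y (vertex u)" if y: "y \<in> realization" for y
  proof -
    obtain v where v: "v \<in> V" "1 / real (card V) \<le> apply_bcontfun y v"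
      using exists_large_coordinate[OF y] by blast
    moreover have "0 < 1 / real (card V)"
      using finite_V V_nonempty by (simp add: card_gt_0_iff)
    ultimately have "0 < apply_bcontfun y v"
      by linarith
    then have "y \<in> open_star v"
      using y by (simp add: open_star_def)
    then have "path_component realization y (vertex v)"
      using closed_segment_vertex_subset_open_star open_star_subset_realization
      by (metis closed_segment_commute path_component_linepath subset_trans)
    moreover obtain \<sigma> where "\<sigma> \<in> K" "vertex v \<in> face_simplex \<sigma>" "vertex u \<in> face_simplex \<sigma>"
      using triangle_face[OF v(1) v(1) u] by blast
    then have "path_component realization (vertex v) (vertex u)"
      using linepath_in_face_simplex face_simplex_subset_realization
      by (metis path_component_linepath path_image_linepath subset_trans)
    ultimately show ?thesis
      by (rule path_component_trans)
  qed
  then show ?thesis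
    unfolding path_connected_component by (meson path_component_sym path_component_trans)
qed

lemma simply_connected_realization: "simply_connected realization"
  unfolding simply_connected_eq_contractible_path
  using path_connected_realization loop_homotopic_constant by blast

definition embed :: "(nat \<Rightarrow> real) \<Rightarrow> nat \<Rightarrow>\<^sub>C real" where
  "embed x = (\<Sum>i\<in>V. x i *\<^sub>R vertex i)"

lemma embed_apply: "apply_bcontfun (embed x) j = (if j \<in> V then x j else 0)"
  unfolding embed_def using finite_V by (simp add: apply_bcontfun_sum if_distrib cong: if_cong)

lemma simply_connected_geom_realization: "simply_connected (geom_realization K)"
proof (rule simply_connected_retraction_gen[OF simply_connected_realization, where h = apply_bcontfun and k = embed])
  have embed_inverse: "apply_bcontfun (embed x) = x" if "x \<in> geom_realization K" for x
    using that face_subset by (fastforce simp: geom_realization_def embed_apply)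
  have embed_in: "embed x \<in> realization" if x: "x \<in> geom_realization K" for x
  proof -
    obtain \<sigma> where \<sigma>: "\<sigma> \<in> K" "\<forall>i. 0 \<le> x i" "\<forall>i. i \<notin> \<sigma> \<longrightarrow> x i = 0" "sum x \<sigma> = 1"
      using x by (auto simp: geom_realization_def)
    then have "embed x \<in> face_simplex \<sigma>"
      using embed_inverse[OF x] by (simp add: face_simplex_def)
    then show ?thesis
      using face_simplex_subset_realization[OF \<sigma>(1)] by blast
  qed
  have "apply_bcontfun y \<in> geom_realization K" if "y \<in> realization" for y
    using that finite_face by (fastforce simp: realization_def face_simplex_def geom_realization_def)
  then show "apply_bcontfun ` realization = geom_realization K"
    using embed_inverse embed_in by (metis image_eqI image_subsetI subsetI subset_antisym)
  show "continuous_on realization apply_bcontfun"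
    by (intro continuous_on_coordinatewise_then_product continuous_on_bcontfun_eval)
  show "continuous_on (geom_realization K) embed"
    unfolding embed_def
    by (intro continuous_on_sum continuous_on_scaleR continuous_on_const
        continuous_on_subset[OF continuous_on_product_coordinates]) simp
  show "embed \<in> geom_realization K \<rightarrow> realization"
    using embed_in by blast
  show "\<And>x. x \<in> geom_realization K \<Longrightarrow> apply_bcontfun (embed x) = x"
    by (rule embed_inverse)
qed

lemma geom_realization_nonempty: "geom_realization K \<noteq> {}"
proof -
  obtain u where "u \<in> V"
    using V_nonempty by blast
  then have "{u} \<in> K"
    by (intro small_face) auto
  then have "(\<lambda>j. if j = u then 1 else 0) \<in> geom_realization K"
    unfolding geom_realization_def by (intro CollectI bexI[of _ "{u}"]) auto
  then show ?thesis
    by blast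
qed

end

lemma card_le_indep_number:
  assumes "finite W" "S \<subseteq> W" "independent_set E S"
  shows "card S \<le> indep_number E W"
proof -
  have "{card S |S. S \<subseteq> W \<and> independent_set E S} \<subseteq> card ` Pow W"
    by blast
  then have "finite {card S |S. S \<subseteq> W \<and> independent_set E S}"
    using assms(1) by (meson finite_Pow_iff finite_imageI finite_subset)
  then show ?thesis
    unfolding indep_number_def using assms(2,3) by (intro Max_ge) blast+
qed

lemma small_set_in_Delta2t_cycle_power:
  fixes r n :: nat
  assumes r: "r \<ge> 3" and n: "n \<ge> 2 * r + 3" and \<tau>: "\<tau> \<subseteq> {1..n}" "card \<tau> \<le> 3"
  shows "\<tau> \<in> Delta2t {1..n} (cyc_pow_adj n r)"
proof -
  have "finite \<tau>"
    using \<tau>(1) finite_subset by blast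
  have "\<exists>i\<in>{1..4::nat}. i \<notin> \<tau> \<and> i + r + 1 \<notin> \<tau>"
  proof (rule ccontr)
    assume "\<not> ?thesis"
    then have hit: "\<And>i. i \<in> {1..4} \<Longrightarrow> i \<in> \<tau> \<or> i + r + 1 \<in> \<tau>"
      by blast
    define f where "f i = (if i \<in> \<tau> then i else i + r + 1)" for i
    have "inj_on f {1..4}"
      unfolding inj_on_def f_def using r by auto
    moreover have "f ` {1..4} \<subseteq> \<tau>"
    proof (rule image_subsetI)
      fix i :: nat
      assume "i \<in> {1..4}"
      then show "f i \<in> \<tau>"
        using hit[of i] by (auto simp: f_def)
    qed
    ultimately have "card {1..4::nat} \<le> card \<tau>"
      using \<open>finite \<tau>\<close> by (meson card_inj_on_le)
    then show False
      using \<tau>(2) by simp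
  qed
  then obtain i where i: "i \<in> {1..4}" "i \<notin> \<tau>" "i + r + 1 \<notin> \<tau>"
    by blast
  have "cycle_dist n i (i + r + 1) = r + 1" "cycle_dist n (i + r + 1) i = r + 1"
    using n by (simp_all add: cycle_dist_def)
  then have "independent_set (cyc_pow_adj n r) {i, i + r + 1}"
    unfolding independent_set_def cyc_pow_adj_def by auto
  moreover have "{i, i + r + 1} \<subseteq> {1..n} - \<tau>"
    using i r n by auto
  ultimately have "card {i, i + r + 1} \<le> indep_number (cyc_pow_adj n r) ({1..n} - \<tau>)"
    by (intro card_le_indep_number) auto
  then show ?thesis
    using \<tau>(1) by (simp add: Delta2t_def)
qed

theorem mainTheorem20:
  fixes r n :: nat
  assumes "r \<ge> 3" and "n \<ge> 2 * r + 3"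
  shows "geom_realization (Delta2t {1..n} (cyc_pow_adj n r)) \<noteq> {} \<and>
         simply_connected (geom_realization (Delta2t {1..n} (cyc_pow_adj n r)))"
proof -
  interpret contains_2_skeleton "{1..n}" "Delta2t {1..n} (cyc_pow_adj n r)"
  proof
    show "\<sigma> \<subseteq> {1..n}" if "\<sigma> \<in> Delta2t {1..n} (cyc_pow_adj n r)" for \<sigma>
      using that by (simp add: Delta2t_def)
    show "\<tau> \<in> Delta2t {1..n} (cyc_pow_adj n r)" if "\<tau> \<subseteq> {1..n}" "card \<tau> \<le> 3" for \<tau>
      using small_set_in_Delta2t_cycle_power[OF assms that] .
  qed (use assms in auto)
  show ?thesis
    using geom_realization_nonempty simply_connected_geom_realization by blast
qed

end
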